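(* Let $X_1\in\mathbb{S}^n_{++}$ and let $\mathbb{C}=\operatorname{conv}\{X_1,Y_1,\dots,Y_k\}$ be the Euclidean convex hull, and $\mathbb{R}_{>0}\cdot\mathbb{C}=\{cX: X\in\mathbb{C},\ c>0\}$. Then there exists $X^*\in\mathbb{R}_{>0}\cdot\mathbb{C}$ such that $$m^k_{X^*}Y_k+\dots+m^1_{X^*}Y_1+\Big(\sum_{j=1}^k o^j_{X^*}\Big)X^*=0.$$
   Context: $\mathbb{S}^n_{++}$ denotes the set of real symmetric positive definite $n\times n$ matrices. For $0<\alpha\le\beta$ and $t\in\mathbb{R}$ set $\varphi_{\alpha\beta}(t)=\frac{\beta^t-\alpha^t}{\beta-\alpha}$ and $\psi_{\alpha\beta}(t)=\frac{\beta\alpha^t-\alpha\beta^t}{\beta-\alpha}$ if $\beta>\alpha$, and $\varphi_{\alpha\beta}(t)=t\alpha^{t-1}$, $\psi_{\alpha\beta}(t)=(1-t)\alpha^t$ if $\beta=\alpha$. Fix $k\ge1$ and $Y_1,\dots,Y_k\in\mathbb{S}^n_{++}$. For $1\le j\le k$ and $X\in\mathbb{S}^n_{++}$ let $\alpha=\lambda_{\min}(Y_jX^{-1})$, $\beta=\lambda_{\max}(Y_jX^{-1})$ (eigenvalues of $Y_jX^{-1}$ are real and positive), $\varphi^j_X=\varphi_{\alpha\beta}$, $\psi^j_X=\psi_{\alpha\beta}$, $m^j_X=\frac{d\varphi^j_X}{dt}(0)$ and $o^j_X=\frac{d\psi^j_X}{dt}(0)$; explicitly $m^j_X=\frac{\log\beta-\log\alpha}{\beta-\alpha}$,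 $o^j_X=\frac{\beta\log\alpha-\alpha\log\beta}{\beta-\alpha}$ if $\beta>\alpha$, and $m^j_X=1/\alpha$, $o^j_X=\log\alpha-1$ if $\beta=\alpha$. *)

theory Defs
  imports "HOL-Analysis.Analysis"
begin

definition spd :: "real^'n^'n \<Rightarrow> bool" where
  "spd A \<longleftrightarrow> transpose A = A \<and> (\<forall>x. x \<noteq> 0 \<longrightarrow> x \<bullet> (A *v x) > 0)"

definition real_eigenvalues :: "real^'n^'n \<Rightarrow> real set" where
  "real_eigenvalues A = {l. \<exists>v. v \<noteq> 0 \<and> A *v v = l *s v}"

definition lam_min :: "real^'n^'n \<Rightarrow> real^'n^'n \<Rightarrow> real" where
  "lam_min Y X = Min (real_eigenvalues (Y ** matrix_inv X))"

definition lam_max :: "real^'n^'n \<Rightarrow> real^'n^'n \<Rightarrow> real" where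
  "lam_max Y X = Max (real_eigenvalues (Y ** matrix_inv X))"

text \<open>m_{alpha beta} = phi'(0), o_{alpha beta} = psi'(0), explicit formulas.\<close>
definition m_ab :: "real \<Rightarrow> real \<Rightarrow> real" where
  "m_ab \<alpha> \<beta> = (if \<beta> = \<alpha> then 1 / \<alpha> else (ln \<beta> - ln \<alpha>) / (\<beta> - \<alpha>))"

definition o_ab :: "real \<Rightarrow> real \<Rightarrow> real" where
  "o_ab \<alpha> \<beta> = (if \<beta> = \<alpha> then ln \<alpha> - 1 else (\<beta> * ln \<alpha> - \<alpha> * ln \<beta>) / (\<beta> - \<alpha>))"

definition m_coef :: "real^'n^'n \<Rightarrow> real^'n^'n \<Rightarrow> real" where
  "m_coef Y X = m_ab (lam_min Y X) (lam_max Y X)"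

definition o_coef :: "real^'n^'n \<Rightarrow> real^'n^'n \<Rightarrow> real" where
  "o_coef Y X = o_ab (lam_min Y X) (lam_max Y X)"

end

theory Submission
  imports Defs
begin

text \<open>The coefficient maps m and o are continuous on positive definite matrices and
scale like \<open>m\<^sup>j(cX) = c m\<^sup>j(X)\<close> and \<open>o\<^sup>j(cX) = o\<^sup>j(X) - ln c\<close>. On the convex hull of
\<open>Y\<^sub>1, \<dots>, Y\<^sub>k\<close> the map \<open>X \<mapsto> \<Sum>\<^sub>j m\<^sup>j(X) Y\<^sub>j / \<Sum>\<^sub>j m\<^sup>j(X)\<close> is a continuous self-map, so by
Brouwer it has a fixed point \<open>X\<^sub>0\<close>, i.e. \<open>\<Sum>\<^sub>j m\<^sup>j(X\<^sub>0) Y\<^sub>j = M X\<^sub>0\<close> with \<open>M = \<Sum>\<^sub>j m\<^sup>j(X\<^sub>0)\<close>.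
Rescaling \<open>X\<^sub>0\<close> by \<open>c = exp ((M + \<Sum>\<^sub>j o\<^sup>j(X\<^sub>0)) / k)\<close> then balances the o-term.
The point found lies in the hull of the \<open>Y\<^sub>j\<close> alone.
Continuity of m rests on the variational description of the extreme eigenvalues of
\<open>Y X\<^sup>-\<^sup>1\<close> as the extreme values of the Rayleigh quotient \<open>u\<^sup>TYu / u\<^sup>TXu\<close> on the unit sphere.\<close>

lemma spd_symmetric: "spd A \<Longrightarrow> transpose A = A"
  by (simp add: spd_def)

lemma spd_quadratic_pos: "spd A \<Longrightarrow> u \<noteq> 0 \<Longrightarrow> u \<bullet> (A *v u) > 0"
  by (simp add: spd_def)

lemma symmetric_matrix_inner:
  fixes A :: "real^'n^'n"
  assumes "transpose A = A"
  shows "(A *v x) \<bullet> y = x \<bullet> (A *v y)"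
  by (metis assms dot_lmul_matrix vector_transpose_matrix)

lemma spd_matrix_inv:
  fixes X :: "real^'n^'n"
  assumes "spd X"
  shows "X ** matrix_inv X = mat 1" "matrix_inv X ** X = mat 1"
proof -
  have "\<forall>x. X *v x = 0 \<longrightarrow> x = 0"
    using spd_quadratic_pos[OF assms] by (metis inner_zero_right less_irrefl)
  then have "invertible X"
    using matrix_left_invertible_ker invertible_left_inverse by blast
  then have "\<exists>A'. X ** A' = mat 1 \<and> A' ** X = mat 1" unfolding invertible_def by blast
  then have "X ** matrix_inv X = mat 1 \<and> matrix_inv X ** X = mat 1"
    unfolding matrix_inv_def by (rule someI_ex)
  then show "X ** matrix_inv X = mat 1" "matrix_inv X ** X = mat 1" by simp_all
qed

lemma spd_scaleR: "spd X \<Longrightarrow> c > 0 \<Longrightarrow> spd (c *\<^sub>R X)"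
  unfolding spd_def by (simp add: transpose_scalar scaleR_matrix_vector_assoc[symmetric])

lemma spd_add: "spd A \<Longrightarrow> spd B \<Longrightarrow> spd (A + B)"
  unfolding spd_def
  by (simp add: matrix_vector_mult_add_rdistrib inner_add_right add_pos_pos transpose_def vec_eq_iff)

lemma convex_spd: "convex {A :: real^'n^'n. spd A}"
  unfolding convex_def
proof clarify
  fix x y :: "real^'n^'n" and u v :: real
  assume "spd x" "spd y" "0 \<le> u" "0 \<le> v" "u + v = 1"
  then consider "u = 0" "v = 1" | "v = 0" "u = 1" | "u > 0" "v > 0" by linarith
  then show "spd (u *\<^sub>R x + v *\<^sub>R y)"
    by cases (use \<open>spd x\<close> \<open>spd y\<close> spd_add spd_scaleR in auto)
qed

lemma real_eigenvalues_mult_matrix_inv_iff: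
  fixes X Y :: "real^'n^'n"
  assumes "spd X"
  shows "l \<in> real_eigenvalues (Y ** matrix_inv X) \<longleftrightarrow> (\<exists>u. u \<noteq> 0 \<and> Y *v u = l *\<^sub>R (X *v u))"
proof
  assume "l \<in> real_eigenvalues (Y ** matrix_inv X)"
  then obtain v where v: "v \<noteq> 0" "(Y ** matrix_inv X) *v v = l *s v"
    unfolding real_eigenvalues_def by blast
  define u where "u = matrix_inv X *v v"
  have Xu: "X *v u = v"
    using spd_matrix_inv[OF assms] by (simp add: u_def matrix_vector_mul_assoc)
  then show "\<exists>u. u \<noteq> 0 \<and> Y *v u = l *\<^sub>R (X *v u)"
    using v by (metis matrix_vector_mul_assoc matrix_vector_mult_0_right scalar_mult_eq_scaleR u_def)
next
  assume "\<exists>u. u \<noteq> 0 \<and> Y *v u = l *\<^sub>R (X *v u)"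
  then obtain u where u: "u \<noteq> 0" "Y *v u = l *\<^sub>R (X *v u)" by blast
  have "X *v u \<noteq> 0" using spd_quadratic_pos[OF assms u(1)] by auto
  moreover have "(Y ** matrix_inv X) *v (X *v u) = l *s (X *v u)"
    using u(2) spd_matrix_inv[OF assms]
    by (metis matrix_vector_mul_assoc matrix_vector_mul_lid scalar_mult_eq_scaleR)
  ultimately show "l \<in> real_eigenvalues (Y ** matrix_inv X)"
    unfolding real_eigenvalues_def by blast
qed

definition rayleigh :: "real^'n^'n \<Rightarrow> real^'n^'n \<Rightarrow> real^'n \<Rightarrow> real" where
  "rayleigh X Y u = (u \<bullet> (Y *v u)) / (u \<bullet> (X *v u))"

lemma generalized_eigenvalue_eq_rayleigh:
  assumes "spd X" "u \<noteq> 0" "Y *v u = l *\<^sub>R (X *v u)"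
  shows "l = rayleigh X Y u"
  using spd_quadratic_pos[OF assms(1,2)] assms(3) by (simp add: rayleigh_def)

lemma matrix_vector_mult_uminus:
  fixes A :: "'a::ring_1^'n^'m"
  shows "(- A) *v x = - (A *v x)"
  using matrix_vector_mult_diff_rdistrib[of 0 A x] by simp

lemma rayleigh_uminus: "rayleigh X (- Y) u = - rayleigh X Y u"
  by (simp add: rayleigh_def matrix_vector_mult_uminus)

lemma rayleigh_scaleR_vector: "c \<noteq> 0 \<Longrightarrow> rayleigh X Y (c *\<^sub>R u) = rayleigh X Y u"
  by (simp add: rayleigh_def matrix_vector_mult_scaleR)

lemma rayleigh_scaleR_matrix: "rayleigh (c *\<^sub>R X) Y u = rayleigh X Y u / c"
  by (simp add: rayleigh_def scaleR_matrix_vector_assoc[symmetric])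

lemma rayleigh_pos: "spd X \<Longrightarrow> spd Y \<Longrightarrow> u \<noteq> 0 \<Longrightarrow> rayleigh X Y u > 0"
  by (simp add: rayleigh_def spd_quadratic_pos)

lemma transpose_uminus: "transpose (- A) = - transpose (A :: 'a::ring_1^'n^'n)"
  by (simp add: transpose_def vec_eq_iff)

lemma generalized_eigenvectors_orthogonal:
  fixes X Y :: "real^'n^'n"
  assumes X: "spd X" and Y: "transpose Y = Y"
    and v: "Y *v v = a *\<^sub>R (X *v v)" and w: "Y *v w = b *\<^sub>R (X *v w)" and "a \<noteq> b"
  shows "v \<bullet> (X *v w) = 0"
proof -
  have "b * (v \<bullet> (X *v w)) = v \<bullet> (Y *v w)" using w by simp
  also have "\<dots> = (Y *v v) \<bullet> w" using symmetric_matrix_inner[OF Y] by simp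
  also have "\<dots> = a * ((X *v v) \<bullet> w)" using v by simp
  also have "\<dots> = a * (v \<bullet> (X *v w))" using symmetric_matrix_inner[OF spd_symmetric[OF X]] by simp
  finally show ?thesis using \<open>a \<noteq> b\<close> by auto
qed

lemma independent_if_orthogonal_wrt_spd:
  fixes X :: "real^'n^'n"
  assumes X: "spd X" and "0 \<notin> U"
    and orth: "\<And>v w. v \<in> U \<Longrightarrow> w \<in> U \<Longrightarrow> v \<noteq> w \<Longrightarrow> v \<bullet> (X *v w) = 0"
  shows "independent U"
  unfolding real_vector.independent_explicit_module
proof (intro allI impI)
  fix t c v0 assume t: "finite t" "t \<subseteq> U" "(\<Sum>v\<in>t. c v *\<^sub>R v) = 0" "v0 \<in> t"
  have "0 = (\<Sum>v\<in>t. c v *\<^sub>R v) \<bullet> (X *v v0)" using t(3) by simp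
  also have "\<dots> = (\<Sum>v\<in>t. c v * (v \<bullet> (X *v v0)))" by (simp add: inner_sum_left)
  also have "\<dots> = c v0 * (v0 \<bullet> (X *v v0)) + (\<Sum>v\<in>t - {v0}. c v * (v \<bullet> (X *v v0)))"
    by (rule sum.remove[OF t(1) t(4)])
  also have "(\<Sum>v\<in>t - {v0}. c v * (v \<bullet> (X *v v0))) = 0"
    using t by (intro sum.neutral) (auto intro: orth)
  finally have "c v0 * (v0 \<bullet> (X *v v0)) = 0" by simp
  moreover have "v0 \<noteq> 0" using t \<open>0 \<notin> U\<close> by blast
  ultimately show "c v0 = 0" using spd_quadratic_pos[OF X] by fastforce
qed

lemma finite_real_eigenvalues_mult_matrix_inv:
  fixes X Y :: "real^'n^'n"
  assumes X: "spd X" and Y: "transpose Y = Y"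
  shows "finite (real_eigenvalues (Y ** matrix_inv X))"
proof -
  let ?E = "real_eigenvalues (Y ** matrix_inv X)"
  define vec where "vec l = (SOME u. u \<noteq> 0 \<and> Y *v u = l *\<^sub>R (X *v u))" for l
  have vec: "vec l \<noteq> 0" "Y *v vec l = l *\<^sub>R (X *v vec l)" if "l \<in> ?E" for l
    using that someI_ex[OF iffD1[OF real_eigenvalues_mult_matrix_inv_iff[OF X]]]
    unfolding vec_def by blast+
  have inj: "inj_on vec ?E"
    by (rule inj_onI) (metis vec generalized_eigenvalue_eq_rayleigh[OF X])
  have "independent (vec ` ?E)"
    by (rule independent_if_orthogonal_wrt_spd[OF X])
      (use vec generalized_eigenvectors_orthogonal[OF X Y] in fastforce)+
  then show ?thesis
    using independent_imp_finite finite_imageD inj by blast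
qed

lemma linear_coeff_zero_if_quadratic_nonpos:
  fixes a b :: real
  assumes "\<And>t. a * t\<^sup>2 + 2 * b * t \<le> 0"
  shows "b = 0"
proof (rule ccontr)
  assume "b \<noteq> 0"
  define s where "s = 1 / (\<bar>a\<bar> + 1)"
  have s: "s > 0" "s * \<bar>a\<bar> < 1" unfolding s_def by (auto simp: field_simps)
  then have "s * a + 2 > 0" by (smt (verit) abs_ge_self abs_minus_cancel mult_left_mono mult_minus_right)
  then have "s * b\<^sup>2 * (s * a + 2) > 0" using s \<open>b \<noteq> 0\<close> by simp
  moreover have "a * (s * b)\<^sup>2 + 2 * b * (s * b) = s * b\<^sup>2 * (s * a + 2)"
    by (simp add: algebra_simps power2_eq_square)
  ultimately show False using assms[of "s * b"] by linarith
qed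

lemma quadratic_form_add_scaleR:
  fixes A :: "real^'n^'n"
  assumes "transpose A = A"
  shows "(u + t *\<^sub>R w) \<bullet> (A *v (u + t *\<^sub>R w))
           = u \<bullet> (A *v u) + 2 * t * (w \<bullet> (A *v u)) + t\<^sup>2 * (w \<bullet> (A *v w))"
proof -
  have "u \<bullet> (A *v w) = w \<bullet> (A *v u)"
    using symmetric_matrix_inner[OF assms, of w u] by (simp add: inner_commute)
  then show ?thesis
    by (simp add: matrix_vector_right_distrib matrix_vector_mult_scaleR inner_add_left
        inner_add_right algebra_simps power2_eq_square)
qed

text \<open>A maximiser \<open>u\<^sub>0\<close> of the Rayleigh quotient is a critical point of
\<open>q(p) = p\<^sup>TYp - \<beta> p\<^sup>TXp\<close> with \<open>\<beta>\<close> the maximum; moving along the residual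
\<open>z = Yu\<^sub>0 - \<beta>Xu\<^sub>0\<close> shows \<open>z = 0\<close>.\<close>

lemma rayleigh_maximizer_eigenvector:
  fixes X Y :: "real^'n^'n"
  assumes X: "spd X" and Y: "transpose Y = Y" and "u0 \<noteq> 0"
    and max: "\<And>u. u \<noteq> 0 \<Longrightarrow> rayleigh X Y u \<le> rayleigh X Y u0"
  shows "Y *v u0 = rayleigh X Y u0 *\<^sub>R (X *v u0)"
proof -
  define \<beta> where "\<beta> = rayleigh X Y u0"
  define q where "q p = p \<bullet> (Y *v p) - \<beta> * (p \<bullet> (X *v p))" for p
  define z where "z = Y *v u0 - \<beta> *\<^sub>R (X *v u0)"
  have q_nonpos: "q p \<le> 0" for p
  proof (cases "p = 0")
    case False
    then have "rayleigh X Y p \<le> \<beta>" using max by (simp add: \<beta>_def)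
    then show ?thesis
      using spd_quadratic_pos[OF X False] by (simp add: q_def rayleigh_def divide_le_eq)
  qed (simp add: q_def)
  have "q u0 = 0"
    using spd_quadratic_pos[OF X \<open>u0 \<noteq> 0\<close>] by (simp add: q_def \<beta>_def rayleigh_def)
  then have "q (u0 + t *\<^sub>R z) = q z * t\<^sup>2 + 2 * (z \<bullet> z) * t" for t
    unfolding q_def quadratic_form_add_scaleR[OF Y] quadratic_form_add_scaleR[OF spd_symmetric[OF X]]
    by (simp add: z_def inner_diff_left algebra_simps)
  then have "z \<bullet> z = 0"
    using q_nonpos by (intro linear_coeff_zero_if_quadratic_nonpos[of "q z"]) metis
  then show ?thesis by (simp add: z_def \<beta>_def)
qed

lemma lam_max_eqI:
  fixes X Y :: "real^'n^'n"
  assumes X: "spd X" and Y: "transpose Y = Y" and "u0 \<noteq> 0"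
    and max: "\<And>u. u \<noteq> 0 \<Longrightarrow> rayleigh X Y u \<le> rayleigh X Y u0"
  shows "lam_max Y X = rayleigh X Y u0"
  unfolding lam_max_def
proof (rule Max_eqI[OF finite_real_eigenvalues_mult_matrix_inv[OF X Y]])
  show "rayleigh X Y u0 \<in> real_eigenvalues (Y ** matrix_inv X)"
    using rayleigh_maximizer_eigenvector[OF assms] \<open>u0 \<noteq> 0\<close>
    by (auto simp: real_eigenvalues_mult_matrix_inv_iff[OF X])
  fix l assume "l \<in> real_eigenvalues (Y ** matrix_inv X)"
  then show "l \<le> rayleigh X Y u0"
    using max generalized_eigenvalue_eq_rayleigh[OF X]
    by (auto simp: real_eigenvalues_mult_matrix_inv_iff[OF X])
qed

lemma quadratic_form_expand:
  "u \<bullet> (A *v u) = (\<Sum>i\<in>UNIV. u $ i * (\<Sum>j\<in>UNIV. A $ i $ j * u $ j))"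
  by (simp add: inner_vec_def matrix_vector_mult_def)

lemma continuous_on_rayleigh:
  "continuous_on {p. spd (fst p) \<and> snd p \<noteq> 0} (\<lambda>p. rayleigh (fst p) Y (snd p :: real^'n))"
proof -
  have "snd p \<bullet> (fst p *v snd p) \<noteq> 0" if "spd (fst p) \<and> snd p \<noteq> 0" for p :: "(real^'n^'n) \<times> (real^'n)"
    using that spd_quadratic_pos by force
  then show ?thesis
    unfolding rayleigh_def quadratic_form_expand[of "snd _"]
    by (intro continuous_intros) (simp_all add: quadratic_form_expand)
qed

lemma rayleigh_attains_max:
  fixes X Y :: "real^'n^'n"
  assumes "spd X"
  obtains u0 where "u0 \<in> sphere 0 1" "\<And>u. u \<noteq> 0 \<Longrightarrow> rayleigh X Y u \<le> rayleigh X Y u0"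
proof -
  have "continuous_on (sphere 0 1) (\<lambda>u. rayleigh (fst (X, u)) Y (snd (X, u)))"
    by (rule continuous_on_compose2[OF continuous_on_rayleigh]) (use assms in \<open>auto intro: continuous_intros\<close>)
  then have cont: "continuous_on (sphere 0 1) (rayleigh X Y)" by simp
  have "sphere (0 :: real^'n) 1 \<noteq> {}" by simp
  then obtain u0 where u0: "u0 \<in> sphere 0 1" "\<forall>u\<in>sphere 0 1. rayleigh X Y u \<le> rayleigh X Y u0"
    using continuous_attains_sup[OF compact_sphere _ cont] by blast
  have "rayleigh X Y u \<le> rayleigh X Y u0" if "u \<noteq> 0" for u
  proof -
    have "rayleigh X Y u = rayleigh X Y ((1 / norm u) *\<^sub>R u)"
      using that by (simp add: rayleigh_scaleR_vector)
    also have "\<dots> \<le> rayleigh X Y u0" using u0(2) that by simp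
    finally show ?thesis .
  qed
  with u0(1) show thesis by (rule that)
qed

lemma lam_max_rayleigh:
  fixes X Y :: "real^'n^'n"
  assumes X: "spd X" and Y: "transpose Y = Y"
  shows "\<exists>u\<in>sphere 0 1. lam_max Y X = rayleigh X Y u"
    and "\<And>u. u \<noteq> 0 \<Longrightarrow> rayleigh X Y u \<le> lam_max Y X"
proof -
  obtain u0 where u0: "u0 \<in> sphere 0 1" "\<And>u. u \<noteq> 0 \<Longrightarrow> rayleigh X Y u \<le> rayleigh X Y u0"
    using rayleigh_attains_max[OF X] by blast
  then have "lam_max Y X = rayleigh X Y u0" by (intro lam_max_eqI[OF X Y]) auto
  with u0 show "\<exists>u\<in>sphere 0 1. lam_max Y X = rayleigh X Y u"
    and "\<And>u. u \<noteq> 0 \<Longrightarrow> rayleigh X Y u \<le> lam_max Y X" by auto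
qed

lemma real_eigenvalues_uminus_mult_matrix_inv:
  fixes X Y :: "real^'n^'n"
  assumes X: "spd X"
  shows "real_eigenvalues ((- Y) ** matrix_inv X) = uminus ` real_eigenvalues (Y ** matrix_inv X)"
proof -
  have "(- Y) *v u = l *\<^sub>R (X *v u) \<longleftrightarrow> Y *v u = (- l) *\<^sub>R (X *v u)" for u l
    using neg_equal_iff_equal[of "Y *v u" "(- l) *\<^sub>R (X *v u)"] by (simp add: matrix_vector_mult_uminus)
  then have "l \<in> real_eigenvalues ((- Y) ** matrix_inv X) \<longleftrightarrow> - l \<in> real_eigenvalues (Y ** matrix_inv X)" for l
    by (simp add: real_eigenvalues_mult_matrix_inv_iff[OF X])
  moreover have "l \<in> uminus ` E \<longleftrightarrow> - l \<in> E" for l :: real and E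
    by (simp add: image_iff) (metis minus_minus)
  ultimately show ?thesis by blast
qed

text \<open>Reduces everything about \<open>\<lambda>\<^sub>m\<^sub>i\<^sub>n\<close> to \<open>\<lambda>\<^sub>m\<^sub>a\<^sub>x\<close>: the symmetric matrix \<open>-Y\<close> need not be
positive definite, which is why the Rayleigh-quotient results only assume symmetry of \<open>Y\<close>.\<close>

lemma lam_min_eq_uminus_lam_max:
  fixes X Y :: "real^'n^'n"
  assumes X: "spd X" and Y: "transpose Y = Y"
  shows "lam_min Y X = - lam_max (- Y) X"
proof -
  let ?E = "real_eigenvalues (Y ** matrix_inv X)"
  obtain u0 where u0: "u0 \<in> sphere 0 1" "\<And>u. u \<noteq> 0 \<Longrightarrow> rayleigh X Y u \<le> rayleigh X Y u0"
    using rayleigh_attains_max[OF X] by blast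
  then have "u0 \<noteq> 0" by auto
  then have "rayleigh X Y u0 \<in> ?E"
    using rayleigh_maximizer_eigenvector[OF X Y _ u0(2)]
    by (auto simp: real_eigenvalues_mult_matrix_inv_iff[OF X])
  then have "?E \<noteq> {}" by blast
  then have "- Max (uminus ` ?E) = Min ?E"
    using finite_real_eigenvalues_mult_matrix_inv[OF X Y] by (simp add: image_image)
  then show ?thesis
    by (simp add: lam_min_def lam_max_def real_eigenvalues_uminus_mult_matrix_inv[OF X])
qed

lemma lam_min_rayleigh:
  fixes X Y :: "real^'n^'n"
  assumes X: "spd X" and Y: "transpose Y = Y"
  shows "\<exists>u\<in>sphere 0 1. lam_min Y X = rayleigh X Y u"
proof -
  have "transpose (- Y) = - Y" using Y by (simp add: transpose_uminus)
  then obtain u where "u \<in> sphere 0 1" "lam_max (- Y) X = rayleigh X (- Y) u"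
    using lam_max_rayleigh(1)[OF X] by blast
  then show ?thesis
    by (metis lam_min_eq_uminus_lam_max[OF X Y] rayleigh_uminus minus_minus)
qed

lemma lam_max_pos:
  assumes "spd X" "spd Y"
  shows "0 < lam_max Y X"
proof -
  obtain u where "u \<in> sphere 0 1" "lam_max Y X = rayleigh X Y u"
    using lam_max_rayleigh(1)[OF assms(1) spd_symmetric[OF assms(2)]] by blast
  moreover from \<open>u \<in> sphere 0 1\<close> have "u \<noteq> 0" by auto
  ultimately show ?thesis using rayleigh_pos[OF assms] by simp
qed

lemma lam_min_pos:
  assumes "spd X" "spd Y"
  shows "0 < lam_min Y X"
proof -
  obtain u where "u \<in> sphere 0 1" "lam_min Y X = rayleigh X Y u"
    using lam_min_rayleigh[OF assms(1) spd_symmetric[OF assms(2)]] by blast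
  moreover from \<open>u \<in> sphere 0 1\<close> have "u \<noteq> 0" by auto
  ultimately show ?thesis using rayleigh_pos[OF assms] by simp
qed

lemma lam_max_scaleR:
  fixes X Y :: "real^'n^'n"
  assumes X: "spd X" and Y: "transpose Y = Y" and c: "c > 0"
  shows "lam_max Y (c *\<^sub>R X) = lam_max Y X / c"
proof -
  obtain u where u: "u \<in> sphere 0 1" "lam_max Y X = rayleigh X Y u"
    using lam_max_rayleigh(1)[OF X Y] by blast
  have "rayleigh (c *\<^sub>R X) Y v \<le> rayleigh (c *\<^sub>R X) Y u" if "v \<noteq> 0" for v
    using lam_max_rayleigh(2)[OF X Y that] u(2) c by (simp add: rayleigh_scaleR_matrix divide_right_mono)
  then have "lam_max Y (c *\<^sub>R X) = rayleigh (c *\<^sub>R X) Y u"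
    using u(1) by (intro lam_max_eqI[OF spd_scaleR[OF X c] Y]) auto
  then show ?thesis using u(2) by (simp add: rayleigh_scaleR_matrix)
qed

lemma lam_min_scaleR:
  fixes X Y :: "real^'n^'n"
  assumes X: "spd X" and Y: "transpose Y = Y" and c: "c > 0"
  shows "lam_min Y (c *\<^sub>R X) = lam_min Y X / c"
proof -
  have "transpose (- Y) = - Y" using Y by (simp add: transpose_uminus)
  then have "lam_max (- Y) (c *\<^sub>R X) = lam_max (- Y) X / c" by (rule lam_max_scaleR[OF X _ c])
  then show ?thesis
    by (simp add: lam_min_eq_uminus_lam_max[OF X Y] lam_min_eq_uminus_lam_max[OF spd_scaleR[OF X c] Y])
qed

lemma continuous_on_parametric_max:
  fixes f :: "'a::metric_space \<times> 'b::metric_space \<Rightarrow> real"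
  assumes S: "compact S" and K: "compact K" and f: "continuous_on (S \<times> K) f"
    and attained: "\<And>x. x \<in> S \<Longrightarrow> \<exists>u\<in>K. g x = f (x, u)"
    and bound: "\<And>x u. x \<in> S \<Longrightarrow> u \<in> K \<Longrightarrow> f (x, u) \<le> g x"
  shows "continuous_on S g"
  unfolding continuous_on_iff
proof (intro ballI allI impI)
  fix x e assume x: "x \<in> S" and e: "(0::real) < e"
  have "uniformly_continuous_on (S \<times> K) f"
    by (rule compact_uniformly_continuous[OF f compact_Times[OF S K]])
  then obtain d where d: "d > 0"
    and close: "\<forall>p\<in>S \<times> K. \<forall>p'\<in>S \<times> K. dist p' p < d \<longrightarrow> dist (f p') (f p) < e / 2"
    using e unfolding uniformly_continuous_on_def by (meson half_gt_zero)
  have shift: "g x' \<le> g x'' + e / 2" if "x' \<in> S" "x'' \<in> S" "dist x' x'' < d" for x' x''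
  proof -
    obtain u where u: "u \<in> K" "g x' = f (x', u)" using attained[OF \<open>x' \<in> S\<close>] by blast
    have "dist (f (x', u)) (f (x'', u)) < e / 2"
      using close that u by (simp add: dist_Pair_Pair)
    moreover have "f (x'', u) \<le> g x''" using bound[OF \<open>x'' \<in> S\<close> \<open>u \<in> K\<close>] .
    ultimately show ?thesis using u(2) unfolding dist_real_def by arith
  qed
  have "dist (g x') (g x) < e" if "x' \<in> S" "dist x' x < d" for x'
    using shift[of x' x] shift[of x x'] that x e by (simp add: dist_real_def dist_commute)
  then show "\<exists>d>0. \<forall>x'\<in>S. dist x' x < d \<longrightarrow> dist (g x') (g x) < e" using d by blast
qed

lemma continuous_on_lam_max:
  fixes Y :: "real^'n^'n"
  assumes S: "compact S" and spd: "\<And>X. X \<in> S \<Longrightarrow> spd X" and Y: "transpose Y = Y"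
  shows "continuous_on S (lam_max Y)"
proof (rule continuous_on_parametric_max[OF S compact_sphere])
  show "continuous_on (S \<times> sphere 0 1) (\<lambda>p. rayleigh (fst p) Y (snd p))"
    by (rule continuous_on_subset[OF continuous_on_rayleigh]) (auto dest: spd)
  show "\<exists>u\<in>sphere 0 1. lam_max Y X = rayleigh (fst (X, u)) Y (snd (X, u))" if "X \<in> S" for X
    using lam_max_rayleigh(1)[OF spd[OF that] Y] by simp
  show "rayleigh (fst (X, u)) Y (snd (X, u)) \<le> lam_max Y X" if "X \<in> S" "u \<in> sphere 0 1" for X u
  proof -
    from that(2) have "u \<noteq> 0" by auto
    then show ?thesis using lam_max_rayleigh(2)[OF spd[OF that(1)] Y] by simp
  qed
qed

lemma continuous_on_lam_min:
  fixes Y :: "real^'n^'n"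
  assumes S: "compact S" and spd: "\<And>X. X \<in> S \<Longrightarrow> spd X" and Y: "transpose Y = Y"
  shows "continuous_on S (lam_min Y)"
proof -
  have "transpose (- Y) = - Y" using Y by (simp add: transpose_uminus)
  then have "continuous_on S (\<lambda>X. - lam_max (- Y) X)"
    by (intro continuous_intros continuous_on_lam_max[OF S spd])
  then show ?thesis
    by (rule continuous_on_eq) (simp add: lam_min_eq_uminus_lam_max[OF spd Y])
qed

definition ln_slope :: "real \<Rightarrow> real" where
  "ln_slope x = (if x = 1 then 1 else ln x / (x - 1))"

lemma ln_slope_pos: "x > 0 \<Longrightarrow> ln_slope x > 0"
  by (cases x "1::real" rule: linorder_cases) (auto simp: ln_slope_def divide_neg_neg)

lemma continuous_on_ln_slope: "continuous_on {0<..} ln_slope"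
proof -
  have "isCont ln_slope x" if "x > 0" for x
  proof (cases "x = 1")
    case True
    have "(ln has_field_derivative 1) (at (1::real))"
      by (auto intro!: derivative_eq_intros)
    then have "((\<lambda>y. ln y / (y - 1)) \<longlongrightarrow> 1) (at (1::real))"
      unfolding has_field_derivative_iff by simp
    moreover have "\<forall>\<^sub>F y in at 1. ln y / (y - 1) = ln_slope y"
      unfolding ln_slope_def eventually_at_filter by simp
    ultimately have "(ln_slope \<longlongrightarrow> 1) (at 1)" by (rule tendsto_cong[THEN iffD1, rotated])
    then show ?thesis using True by (simp add: isCont_def ln_slope_def)
  next
    case False
    have "isCont (\<lambda>y. ln y / (y - 1)) x" using that False by (intro continuous_intros) auto
    moreover have "\<forall>\<^sub>F y in nhds x. ln y / (y - 1) = ln_slope y"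
      using eventually_nhds_in_open[of "- {1}" x] False
      by (auto simp: ln_slope_def elim!: eventually_mono)
    ultimately show ?thesis using isCont_cong[of "\<lambda>y. ln y / (y - 1)" ln_slope x] by simp
  qed
  then show ?thesis by (simp add: continuous_at_imp_continuous_on)
qed

text \<open>Unlike the definition of \<open>m_ab\<close>, this form is visibly continuous across the diagonal \<open>\<alpha> = \<beta>\<close>.\<close>

lemma m_ab_eq_ln_slope: "a > 0 \<Longrightarrow> b > 0 \<Longrightarrow> m_ab a b = ln_slope (b / a) / a"
  by (auto simp: m_ab_def ln_slope_def ln_div field_simps)

lemma m_ab_divide: "a > 0 \<Longrightarrow> b > 0 \<Longrightarrow> c > 0 \<Longrightarrow> m_ab (a / c) (b / c) = c * m_ab a b"
  by (cases "a = b") (auto simp: m_ab_def ln_div field_simps)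

lemma o_ab_divide: "a > 0 \<Longrightarrow> b > 0 \<Longrightarrow> c > 0 \<Longrightarrow> o_ab (a / c) (b / c) = o_ab a b - ln c"
  by (cases "a = b") (auto simp: o_ab_def ln_div field_simps)

lemma m_coef_eq_ln_slope:
  "spd X \<Longrightarrow> spd Y \<Longrightarrow> m_coef Y X = ln_slope (lam_max Y X / lam_min Y X) / lam_min Y X"
  by (simp add: m_coef_def m_ab_eq_ln_slope lam_min_pos lam_max_pos)

lemma m_coef_pos: "spd X \<Longrightarrow> spd Y \<Longrightarrow> m_coef Y X > 0"
  by (simp add: m_coef_eq_ln_slope ln_slope_pos lam_min_pos lam_max_pos)

lemma m_coef_scaleR: "spd X \<Longrightarrow> spd Y \<Longrightarrow> c > 0 \<Longrightarrow> m_coef Y (c *\<^sub>R X) = c * m_coef Y X"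
  by (simp add: m_coef_def lam_max_scaleR lam_min_scaleR spd_symmetric m_ab_divide lam_min_pos lam_max_pos)

lemma o_coef_scaleR: "spd X \<Longrightarrow> spd Y \<Longrightarrow> c > 0 \<Longrightarrow> o_coef Y (c *\<^sub>R X) = o_coef Y X - ln c"
  by (simp add: o_coef_def lam_max_scaleR lam_min_scaleR spd_symmetric o_ab_divide lam_min_pos lam_max_pos)

lemma continuous_on_m_coef:
  assumes S: "compact S" and spd: "\<And>X. X \<in> S \<Longrightarrow> spd X" and Y: "spd Y"
  shows "continuous_on S (m_coef Y)"
proof -
  note lam_max = continuous_on_lam_max[OF S spd spd_symmetric[OF Y]]
    and lam_min = continuous_on_lam_min[OF S spd spd_symmetric[OF Y]]
  have pos: "0 < lam_min Y X" "0 < lam_max Y X" if "X \<in> S" for X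
    using lam_min_pos lam_max_pos spd[OF that] Y by auto
  have "continuous_on S (\<lambda>X. lam_max Y X / lam_min Y X)"
    using lam_max lam_min by (intro continuous_intros) (auto dest: pos(1))
  then have "continuous_on S (\<lambda>X. ln_slope (lam_max Y X / lam_min Y X))"
    by (rule continuous_on_compose2[OF continuous_on_ln_slope]) (auto simp: pos)
  then have "continuous_on S (\<lambda>X. ln_slope (lam_max Y X / lam_min Y X) / lam_min Y X)"
    using lam_min by (intro continuous_intros) (auto dest: pos(1))
  then show ?thesis
    by (rule continuous_on_eq) (simp add: m_coef_eq_ln_slope spd Y)
qed

lemma weighted_mean_fixed_point:
  fixes p :: "'i \<Rightarrow> 'a::euclidean_space"
  assumes J: "finite J" "J \<noteq> {}"
    and w_cont: "\<And>j. j \<in> J \<Longrightarrow> continuous_on (convex hull (p ` J)) (w j)"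
    and w_pos: "\<And>j X. j \<in> J \<Longrightarrow> X \<in> convex hull (p ` J) \<Longrightarrow> w j X > 0"
  shows "\<exists>X \<in> convex hull (p ` J). (\<Sum>j\<in>J. w j X *\<^sub>R p j) = (\<Sum>j\<in>J. w j X) *\<^sub>R X"
proof -
  let ?S = "convex hull (p ` J)"
  define W where "W X = (\<Sum>j\<in>J. w j X)" for X
  have W_pos: "W X > 0" if "X \<in> ?S" for X
    unfolding W_def using J w_pos[OF _ that] by (intro sum_pos) auto
  define F where "F X = (\<Sum>j\<in>J. (w j X / W X) *\<^sub>R p j)" for X
  have "continuous_on ?S F"
    unfolding F_def W_def using w_cont
    by (intro continuous_intros) (auto dest: W_pos simp: W_def)
  moreover have "F X \<in> ?S" if X: "X \<in> ?S" for X
    unfolding F_def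
  proof (rule convex_sum[OF J(1) convex_convex_hull])
    show "(\<Sum>j\<in>J. w j X / W X) = 1"
      using W_pos[OF X] by (simp add: sum_divide_distrib[symmetric] W_def)
    show "\<And>j. j \<in> J \<Longrightarrow> 0 \<le> w j X / W X"
      using w_pos[OF _ X] W_pos[OF X] by (simp add: less_imp_le)
  qed (simp add: hull_inc)
  ultimately obtain X where X: "X \<in> ?S" "F X = X"
    using brouwer[of ?S F] J by (auto simp: compact_convex_hull finite_imp_compact)
  have "(\<Sum>j\<in>J. w j X *\<^sub>R p j) = W X *\<^sub>R F X"
    using W_pos[OF X(1)] by (simp add: F_def scaleR_sum_right)
  then show ?thesis using X by (auto simp: W_def)
qed

lemma coefficient_equation_by_rescaling:
  fixes X :: "real^'n^'n" and Y :: "'i \<Rightarrow> real^'n^'n"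
  assumes J: "finite J" "J \<noteq> {}" and X: "spd X" and Y: "\<And>j. j \<in> J \<Longrightarrow> spd (Y j)"
    and fixed: "(\<Sum>j\<in>J. m_coef (Y j) X *\<^sub>R Y j) = (\<Sum>j\<in>J. m_coef (Y j) X) *\<^sub>R X"
  shows "\<exists>c>0. (\<Sum>j\<in>J. m_coef (Y j) (c *\<^sub>R X) *\<^sub>R Y j) + (\<Sum>j\<in>J. o_coef (Y j) (c *\<^sub>R X)) *\<^sub>R (c *\<^sub>R X) = 0"
proof -
  let ?M = "\<Sum>j\<in>J. m_coef (Y j) X" and ?O = "\<Sum>j\<in>J. o_coef (Y j) X"
  define c where "c = exp ((?M + ?O) / card J)"
  have c: "c > 0" by (simp add: c_def)
  have card_ln_c: "card J * ln c = ?M + ?O"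
    using J by (simp add: c_def card_gt_0_iff)
  have "(\<Sum>j\<in>J. m_coef (Y j) (c *\<^sub>R X) *\<^sub>R Y j) = c *\<^sub>R (\<Sum>j\<in>J. m_coef (Y j) X *\<^sub>R Y j)"
    using m_coef_scaleR[OF X Y c] by (simp add: scaleR_sum_right)
  also have "\<dots> = (c * ?M) *\<^sub>R X" by (simp add: fixed)
  finally have m: "(\<Sum>j\<in>J. m_coef (Y j) (c *\<^sub>R X) *\<^sub>R Y j) = (c * ?M) *\<^sub>R X" .
  have "(\<Sum>j\<in>J. o_coef (Y j) (c *\<^sub>R X)) = ?O - card J * ln c"
    using o_coef_scaleR[OF X Y c] by (simp add: sum_subtractf)
  then have o: "(\<Sum>j\<in>J. o_coef (Y j) (c *\<^sub>R X)) = - ?M" using card_ln_c by simp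
  have "(\<Sum>j\<in>J. m_coef (Y j) (c *\<^sub>R X) *\<^sub>R Y j) + (\<Sum>j\<in>J. o_coef (Y j) (c *\<^sub>R X)) *\<^sub>R (c *\<^sub>R X) = 0"
    unfolding m o by simp
  with c show ?thesis by blast
qed

theorem lemma4p4:
  fixes k :: nat and Y :: "nat \<Rightarrow> real^'n^'n" and X1 :: "real^'n^'n"
  assumes "k \<ge> 1"
    and "\<forall>j\<in>{1..k}. spd (Y j)"
    and "spd X1"
  shows "\<exists>Xs \<in> {c *\<^sub>R Z | c Z. c > 0 \<and> Z \<in> convex hull (insert X1 (Y ` {1..k}))}.
           (\<Sum>j=1..k. m_coef (Y j) Xs *\<^sub>R Y j) + (\<Sum>j=1..k. o_coef (Y j) Xs) *\<^sub>R Xs = 0"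
proof -
  let ?S = "convex hull (Y ` {1..k})"
  have spd_S: "spd X" if "X \<in> ?S" for X
    using hull_minimal[of "Y ` {1..k}" "{A. spd A}" convex] convex_spd assms(2) that by blast
  obtain X0 where X0: "X0 \<in> ?S"
    and fixed: "(\<Sum>j=1..k. m_coef (Y j) X0 *\<^sub>R Y j) = (\<Sum>j=1..k. m_coef (Y j) X0) *\<^sub>R X0"
    using weighted_mean_fixed_point[where J = "{1..k}" and p = Y and w = "\<lambda>j. m_coef (Y j)"] assms(1,2)
      continuous_on_m_coef[OF compact_convex_hull[OF finite_imp_compact] spd_S] m_coef_pos[OF spd_S]
    by auto
  obtain c where "c > 0"
    and "(\<Sum>j=1..k. m_coef (Y j) (c *\<^sub>R X0) *\<^sub>R Y j) + (\<Sum>j=1..k. o_coef (Y j) (c *\<^sub>R X0)) *\<^sub>R (c *\<^sub>R X0) = 0"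
    using coefficient_equation_by_rescaling[OF _ _ spd_S[OF X0] _ fixed] assms(1,2) by auto
  moreover have "?S \<subseteq> convex hull (insert X1 (Y ` {1..k}))" by (rule hull_mono) auto
  ultimately show ?thesis using X0 by blast
qed

end
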